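(* Let $(X,X')$ be an exchangeable pair of random elements, and let $W=W(X)$ and $W'=W(X')$ be integer valued. Define $Q_m(x)=\mathbb{P}[W'=W+m\mid X=x]$ and $q_m=\mathbb{E}Q_m(X)=\mathbb{P}[W'=W+m]$. Then for every positive integer $m$ (with $q_m>0$), \[ D_{1,m}(\mathcal{L}(W))\le\frac{\sqrt{\mathrm{Var}\,Q_m(X)}+\sqrt{\mathrm{Var}\,Q_{-m}(X)}}{q_m}. \]
   Context: For $f:\mathbb{Z}\to\mathbb{R}$, $\|f\|_1=\sum_i|f(i)|$; $\Delta^0f=f$, $\Delta^{n+1}f(k)=\Delta^nf(k+1)-\Delta^nf(k)$. For an integer-valued random variable $W$ with distribution function $F(j)=\mathbb{P}[W\le j]$ and positive integer $m$, $\bar F^m(j)=\frac{F(j)+\dots+F(j-m+1)}{m}$ and $D_{n,m}(\mathcal{L}(W))=m\|\Delta^{n+1}\bar F^m\|_1$. *)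

theory Defs
  imports "HOL-Probability.Probability"
begin

fun fdiff :: "nat \<Rightarrow> (int \<Rightarrow> real) \<Rightarrow> int \<Rightarrow> real" where
  "fdiff 0 f = f"
| "fdiff (Suc n) f = (\<lambda>k. fdiff n f (k + 1) - fdiff n f k)"

definition norm1 :: "(int \<Rightarrow> real) \<Rightarrow> real" where
  "norm1 f = (\<Sum>\<^sub>\<infinity> i\<in>(UNIV::int set). \<bar>f i\<bar>)"

definition cdf_int :: "int measure \<Rightarrow> int \<Rightarrow> real" where
  "cdf_int L j = measure L {..j}"

definition Fbar :: "nat \<Rightarrow> (int \<Rightarrow> real) \<Rightarrow> int \<Rightarrow> real" where
  "Fbar m F j = (\<Sum>i<m. F (j - int i)) / real m"

definition D_nm :: "nat \<Rightarrow> nat \<Rightarrow> int measure \<Rightarrow> real" where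
  "D_nm n m L = real m * norm1 (fdiff (Suc n) (Fbar m (cdf_int L)))"

end

theory Submission
  imports Defs
begin

text \<open>
  Write \<open>p j = P[W = j]\<close>. Telescoping the average \<open>Fbar\<^sup>m\<close> gives
  \<open>m \<Delta>\<^sup>2 Fbar\<^sup>m F (k) = p (k + 2) - p (k + 2 - m)\<close>, so \<open>D\<^sub>1\<^sub>,\<^sub>m = \<Sum>\<^sub>j |p (j + m) - p j|\<close>.
  Exchangeability gives \<open>P[W = j, W' = j + m] = P[W = j + m, W' = j]\<close>, i.e.
  \<open>E[1{W = j} Q\<^sub>m(X)] = E[1{W = j + m} Q\<^sub>-\<^sub>m(X)]\<close>. Replacing \<open>Q\<^sub>\<plusminus>\<^sub>m(X)\<close> by the common
  mean \<open>q\<^sub>m = q\<^sub>-\<^sub>m\<close> on both sides costs at most \<open>E[1{W = \<cdot>} |Q\<^sub>\<plusminus>\<^sub>m(X) - q\<^sub>m|]\<close>; summing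
  over \<open>j\<close> the level sets partition the space, and \<open>E|Q - E Q| \<le> sqrt (Var Q)\<close> finishes.
\<close>

lemma (in prob_space) expectation_abs_dev_le_sqrt_variance:
  fixes Y :: "'a \<Rightarrow> real"
  assumes "integrable M Y" and "integrable M (\<lambda>x. (Y x)\<^sup>2)"
  shows "expectation (\<lambda>x. \<bar>Y x - expectation Y\<bar>) \<le> sqrt (variance Y)"
proof -
  define Z where "Z = (\<lambda>x. \<bar>Y x - expectation Y\<bar>)"
  have Z_square: "(\<lambda>x. (Z x)\<^sup>2) = (\<lambda>x. (Y x)\<^sup>2 - 2 * expectation Y * Y x + (expectation Y)\<^sup>2)"
    unfolding Z_def by (auto simp: power2_eq_square algebra_simps)
  have "integrable M Z" "integrable M (\<lambda>x. (Z x)\<^sup>2)"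
    using assms unfolding Z_square by (auto simp: Z_def simp del: power2_abs)
  then have "(expectation Z)\<^sup>2 \<le> expectation (\<lambda>x. (Z x)\<^sup>2)"
    using variance_positive[of Z] variance_eq[of Z] by simp
  also have "expectation (\<lambda>x. (Z x)\<^sup>2) = variance Y"
    by (simp add: Z_def)
  finally have "sqrt ((expectation Z)\<^sup>2) \<le> sqrt (variance Y)"
    by (rule real_sqrt_le_mono)
  then show ?thesis
    by (simp add: Z_def)
qed

lemma (in finite_measure) abs_diff_integral_indicator_le:
  fixes Q :: "'a \<Rightarrow> real"
  assumes A: "A \<in> sets M" and Q: "integrable M Q"
  shows "\<bar>c * measure M A - (\<integral>x. indicator A x * Q x \<partial>M)\<bar> \<le> (\<integral>x. indicator A x * \<bar>Q x - c\<bar> \<partial>M)"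
proof -
  have "integrable M (\<lambda>x. indicator A x * c)"
    using A by (intro integrable_mult_left) (simp add: emeasure_eq_measure)
  moreover have "integrable M (\<lambda>x. indicator A x * Q x)"
    using integrable_mult_indicator[OF A Q] by simp
  ultimately have "c * measure M A - (\<integral>x. indicator A x * Q x \<partial>M) = (\<integral>x. indicator A x * (c - Q x) \<partial>M)"
    using A by (simp add: integral_diff[symmetric] right_diff_distrib)
  also have "\<bar>\<dots>\<bar> \<le> (\<integral>x. \<bar>indicator A x * (c - Q x)\<bar> \<partial>M)"
    by (rule integral_abs_bound)
  also have "(\<lambda>x. \<bar>indicator A x * (c - Q x)\<bar>) = (\<lambda>x. indicator A x * \<bar>Q x - c\<bar>)"
    by (auto simp: indicator_def abs_minus_commute)
  finally show ?thesis .
qed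

lemma sum_integral_indicator_fibres_le:
  fixes f :: "'a \<Rightarrow> real" and g :: "'a \<Rightarrow> 'b"
  assumes f: "integrable M f" "\<And>x. 0 \<le> f x" and "finite J"
    and [measurable]: "g \<in> measurable M (count_space UNIV)"
  shows "(\<Sum>j\<in>J. \<integral>x. indicator {\<omega>\<in>space M. g \<omega> = j} x * f x \<partial>M) \<le> (\<integral>x. f x \<partial>M)"
proof -
  have integrable: "integrable M (\<lambda>x. indicator {\<omega>\<in>space M. g \<omega> = j} x * f x)" for j
    using integrable_mult_indicator[OF _ f(1), of "{\<omega>\<in>space M. g \<omega> = j}"] by simp
  have pointwise: "(\<Sum>j\<in>J. indicator {\<omega>\<in>space M. g \<omega> = j} x * f x) \<le> f x" for x
  proof -
    have "(\<Sum>j\<in>J. indicator {\<omega>\<in>space M. g \<omega> = j} x * f x)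
        = (\<Sum>j\<in>J. if j = g x then indicator (space M) x * f x else 0)"
      by (rule sum.cong) (auto simp: indicator_def)
    also have "\<dots> \<le> f x"
      using \<open>finite J\<close> f(2)[of x] by (simp add: sum.delta' indicator_def)
    finally show ?thesis .
  qed
  have "(\<Sum>j\<in>J. \<integral>x. indicator {\<omega>\<in>space M. g \<omega> = j} x * f x \<partial>M)
      = (\<integral>x. (\<Sum>j\<in>J. indicator {\<omega>\<in>space M. g \<omega> = j} x * f x) \<partial>M)"
    using integrable by (simp add: Bochner_Integration.integral_sum)
  also have "\<dots> \<le> (\<integral>x. f x \<partial>M)"
    using integrable f(1) pointwise by (intro integral_mono) auto
  finally show ?thesis .
qed

lemma nonneg_finite_sums_le_summable_on:
  fixes f :: "'a \<Rightarrow> real"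
  assumes "\<And>x. 0 \<le> f x" and "\<And>F. finite F \<Longrightarrow> sum f F \<le> B"
  shows "f summable_on UNIV" and "infsum f UNIV \<le> B"
proof -
  show summable: "f summable_on UNIV"
    using assms by (intro nonneg_bdd_above_summable_on bdd_aboveI) auto
  show "infsum f UNIV \<le> B"
    using assms by (intro infsum_le_finite_sums[OF summable]) auto
qed

lemma Fbar_diff:
  fixes G :: "int \<Rightarrow> real"
  assumes "m > 0"
  shows "Fbar m G (k + 1) - Fbar m G k = (G (k + 1) - G (k + 1 - int m)) / real m"
proof -
  have telescope: "(\<Sum>i<n. G (k + 1 - int i) - G (k - int i)) = G (k + 1) - G (k + 1 - int n)" for n
    by (induction n) (auto simp: algebra_simps)
  have "Fbar m G (k + 1) - Fbar m G k = (\<Sum>i<m. G (k + 1 - int i) - G (k - int i)) / real m"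
    unfolding Fbar_def sum_subtractf by (simp add: diff_divide_distrib algebra_simps)
  then show ?thesis
    using telescope by simp
qed

lemma fdiff2_Fbar:
  fixes G :: "int \<Rightarrow> real"
  assumes "m > 0"
  shows "real m * fdiff 2 (Fbar m G) k
    = (G (k + 2) - G (k + 1)) - (G (k + 2 - int m) - G (k + 1 - int m))"
proof -
  have "fdiff 2 (Fbar m G) k = (Fbar m G (k + 1 + 1) - Fbar m G (k + 1)) - (Fbar m G (k + 1) - Fbar m G k)"
    by (simp add: numeral_2_eq_2)
  also have "\<dots> = (G (k + 2) - G (k + 2 - int m)) / real m - (G (k + 1) - G (k + 1 - int m)) / real m"
    using Fbar_diff[OF assms, of G "k + 1"] Fbar_diff[OF assms, of G k] by (simp add: algebra_simps)
  finally have "fdiff 2 (Fbar m G) k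
      = ((G (k + 2) - G (k + 1)) - (G (k + 2 - int m) - G (k + 1 - int m))) / real m"
    by (simp add: diff_divide_distrib)
  then show ?thesis
    using assms by simp
qed

lemma cdf_int_diff:
  assumes "finite_measure L" and "sets L = UNIV"
  shows "cdf_int L t - cdf_int L (t - 1) = measure L {t}"
proof -
  have "measure L ({..t - 1} \<union> {t}) = measure L {..t - 1} + measure L {t}"
    using assms by (intro finite_measure.finite_measure_Union) auto
  moreover have "{..t - 1} \<union> {t} = {..t}"
    by auto
  ultimately show ?thesis
    unfolding cdf_int_def by simp
qed

lemma fdiff2_Fbar_cdf_int:
  assumes "finite_measure L" and "sets L = UNIV" and "m > 0"
  shows "real m * fdiff 2 (Fbar m (cdf_int L)) k = measure L {k + 2} - measure L {k + 2 - int m}"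
  using fdiff2_Fbar[OF \<open>m > 0\<close>, of "cdf_int L" k]
    cdf_int_diff[OF assms(1,2), of "k + 2"] cdf_int_diff[OF assms(1,2), of "k + 2 - int m"]
  by (simp add: algebra_simps)

locale exchangeable_pair = prob_space M for M :: "'a measure" +
  fixes N :: "'b measure" and X X' :: "'a \<Rightarrow> 'b" and W :: "'b \<Rightarrow> int"
  assumes X_measurable[measurable]: "X \<in> measurable M N"
    and X'_measurable[measurable]: "X' \<in> measurable M N"
    and W_measurable[measurable]: "W \<in> measurable N (count_space UNIV)"
    and exchangeable: "distr M (N \<Otimes>\<^sub>M N) (\<lambda>\<omega>. (X \<omega>, X' \<omega>)) = distr M (N \<Otimes>\<^sub>M N) (\<lambda>\<omega>. (X' \<omega>, X \<omega>))"
begin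

definition level_set :: "int \<Rightarrow> 'a set" where
  "level_set j = {\<omega>\<in>space M. W (X \<omega>) = j}"

definition jump_event :: "int \<Rightarrow> 'a set" where
  "jump_event k = {\<omega>\<in>space M. W (X' \<omega>) = W (X \<omega>) + k}"

definition jump_prob :: "int \<Rightarrow> 'a \<Rightarrow> real" where
  "jump_prob k = real_cond_exp M (vimage_algebra (space M) X N) (indicator (jump_event k))"

definition law :: "int measure" where
  "law = distr M (count_space UNIV) (\<lambda>\<omega>. W (X \<omega>))"

lemma level_set_sets[measurable]: "level_set j \<in> sets M"
  unfolding level_set_def by measurable

lemma jump_event_sets[measurable]: "jump_event k \<in> sets M"
  unfolding jump_event_def by measurable

lemma prob_swap:
  assumes "S \<in> sets (N \<Otimes>\<^sub>M N)"
  shows "prob {\<omega>\<in>space M. (X \<omega>, X' \<omega>) \<in> S} = prob {\<omega>\<in>space M. (X' \<omega>, X \<omega>) \<in> S}"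
proof -
  have "prob {\<omega>\<in>space M. (X \<omega>, X' \<omega>) \<in> S} = measure (distr M (N \<Otimes>\<^sub>M N) (\<lambda>\<omega>. (X \<omega>, X' \<omega>))) S"
    using assms by (subst measure_distr) (auto simp: Int_def conj_commute)
  also have "\<dots> = measure (distr M (N \<Otimes>\<^sub>M N) (\<lambda>\<omega>. (X' \<omega>, X \<omega>))) S"
    by (simp add: exchangeable)
  also have "\<dots> = prob {\<omega>\<in>space M. (X' \<omega>, X \<omega>) \<in> S}"
    using assms by (subst measure_distr) (auto simp: Int_def conj_commute)
  finally show ?thesis .
qed

lemma prob_level_set_jump_event_swap:
  "prob (level_set j \<inter> jump_event k) = prob (level_set (j + k) \<inter> jump_event (- k))"
proof -
  let ?S = "{z\<in>space (N \<Otimes>\<^sub>M N). W (fst z) = j \<and> W (snd z) = j + k}"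
  have "level_set j \<inter> jump_event k = {\<omega>\<in>space M. (X \<omega>, X' \<omega>) \<in> ?S}"
    "level_set (j + k) \<inter> jump_event (- k) = {\<omega>\<in>space M. (X' \<omega>, X \<omega>) \<in> ?S}"
    using measurable_space[OF X_measurable] measurable_space[OF X'_measurable]
    by (auto simp: level_set_def jump_event_def space_pair_measure)
  moreover have "?S \<in> sets (N \<Otimes>\<^sub>M N)"
    by measurable
  ultimately show ?thesis
    by (simp only: prob_swap)
qed

lemma prob_jump_event_uminus: "prob (jump_event (- k)) = prob (jump_event k)"
proof -
  let ?S = "{z\<in>space (N \<Otimes>\<^sub>M N). W (snd z) = W (fst z) + k}"
  have "jump_event k = {\<omega>\<in>space M. (X \<omega>, X' \<omega>) \<in> ?S}"
    "jump_event (- k) = {\<omega>\<in>space M. (X' \<omega>, X \<omega>) \<in> ?S}"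
    using measurable_space[OF X_measurable] measurable_space[OF X'_measurable]
    by (auto simp: jump_event_def space_pair_measure)
  moreover have "?S \<in> sets (N \<Otimes>\<^sub>M N)"
    by measurable
  ultimately show ?thesis
    by (simp only: prob_swap)
qed

sublocale given_X: finite_measure_subalgebra M "vimage_algebra (space M) X N"
  using X_measurable by unfold_locales (auto simp: subalgebra_def measurable_iff_sets)

lemma level_set_sets_given_X: "level_set j \<in> sets (vimage_algebra (space M) X N)"
proof -
  have "level_set j = X -` (W -` {j} \<inter> space N) \<inter> space M"
    unfolding level_set_def using measurable_space[OF X_measurable] by auto
  moreover have "W -` {j} \<inter> space N \<in> sets N"
    by measurable
  ultimately show ?thesis
    using in_vimage_algebra by metis
qed

lemma integrable_indicator_jump_event: "integrable M (indicator (jump_event k) :: 'a \<Rightarrow> real)"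
  by (simp add: emeasure_eq_measure)

lemma integrable_jump_prob: "integrable M (jump_prob k)"
  unfolding jump_prob_def using integrable_indicator_jump_event by (rule given_X.real_cond_exp_int(1))

lemma expectation_jump_prob: "expectation (jump_prob k) = prob (jump_event k)"
  unfolding jump_prob_def using given_X.real_cond_exp_int(2)[OF integrable_indicator_jump_event] by simp

lemma jump_prob_bounds: "AE x in M. 0 \<le> jump_prob k x \<and> jump_prob k x \<le> 1"
proof -
  have "AE x in M. 0 \<le> jump_prob k x"
    unfolding jump_prob_def by (rule given_X.real_cond_exp_pos) auto
  moreover have "AE x in M. jump_prob k x \<le> 1"
    unfolding jump_prob_def
    by (rule given_X.real_cond_exp_le_c[OF integrable_indicator_jump_event]) (auto simp: indicator_def)
  ultimately show ?thesis
    by eventually_elim auto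
qed

lemma integrable_jump_prob_square: "integrable M (\<lambda>x. (jump_prob k x)\<^sup>2)"
proof (rule Bochner_Integration.integrable_bound[where f="\<lambda>_. 1::real"])
  show "(\<lambda>x. (jump_prob k x)\<^sup>2) \<in> borel_measurable M"
    unfolding jump_prob_def by measurable
  show "AE x in M. norm ((jump_prob k x)\<^sup>2) \<le> norm (1::real)"
    using jump_prob_bounds[of k] by eventually_elim (auto simp: power_le_one)
qed simp

lemma integral_level_set_jump_prob:
  "(\<integral>x. indicator (level_set j) x * jump_prob k x \<partial>M) = prob (level_set j \<inter> jump_event k)"
proof -
  have "(\<integral>x \<in> level_set j. jump_prob k x \<partial>M) = (\<integral>x \<in> level_set j. indicator (jump_event k) x \<partial>M)"
    unfolding jump_prob_def
    by (rule given_X.real_cond_exp_intA[OF integrable_indicator_jump_event level_set_sets_given_X, symmetric])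
  also have "\<dots> = prob (level_set j \<inter> jump_event k)"
    unfolding set_lebesgue_integral_def
    by (simp add: indicator_inter_arith[symmetric])
  finally show ?thesis
    unfolding set_lebesgue_integral_def by simp
qed

lemma prob_jump_event_mult_abs_diff_le:
  "prob (jump_event k) * \<bar>prob (level_set (j + k)) - prob (level_set j)\<bar>
    \<le> (\<integral>x. indicator (level_set (j + k)) x * \<bar>jump_prob (- k) x - prob (jump_event k)\<bar> \<partial>M)
      + (\<integral>x. indicator (level_set j) x * \<bar>jump_prob k x - prob (jump_event k)\<bar> \<partial>M)"
proof -
  let ?q = "prob (jump_event k)"
  have "\<bar>?q * prob (level_set (j + k)) - prob (level_set (j + k) \<inter> jump_event (- k))\<bar>
      \<le> (\<integral>x. indicator (level_set (j + k)) x * \<bar>jump_prob (- k) x - ?q\<bar> \<partial>M)"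
    using abs_diff_integral_indicator_le[OF level_set_sets integrable_jump_prob]
    by (simp only: integral_level_set_jump_prob)
  moreover have "\<bar>?q * prob (level_set j) - prob (level_set j \<inter> jump_event k)\<bar>
      \<le> (\<integral>x. indicator (level_set j) x * \<bar>jump_prob k x - ?q\<bar> \<partial>M)"
    using abs_diff_integral_indicator_le[OF level_set_sets integrable_jump_prob]
    by (simp only: integral_level_set_jump_prob)
  moreover have "?q * \<bar>prob (level_set (j + k)) - prob (level_set j)\<bar>
      = \<bar>(?q * prob (level_set (j + k)) - prob (level_set (j + k) \<inter> jump_event (- k)))
          - (?q * prob (level_set j) - prob (level_set j \<inter> jump_event k))\<bar>"
    using prob_level_set_jump_event_swap[of j k]
    by (simp add: abs_mult abs_of_nonneg flip: right_diff_distrib)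
  ultimately show ?thesis
    by linarith
qed

lemma sum_abs_prob_level_set_diff_le:
  assumes "finite J" and "prob (jump_event k) > 0"
  shows "(\<Sum>j\<in>J. \<bar>prob (level_set (j + k)) - prob (level_set j)\<bar>)
    \<le> (sqrt (variance (jump_prob k)) + sqrt (variance (jump_prob (- k)))) / prob (jump_event k)"
proof -
  let ?q = "prob (jump_event k)"
  have fibres: "(\<Sum>j\<in>J'. \<integral>x. indicator (level_set j) x * \<bar>jump_prob l x - ?q\<bar> \<partial>M)
      \<le> expectation (\<lambda>x. \<bar>jump_prob l x - ?q\<bar>)" if "finite J'" for J' l
    unfolding level_set_def using that integrable_jump_prob
    by (intro sum_integral_indicator_fibres_le) auto
  have dev: "expectation (\<lambda>x. \<bar>jump_prob l x - ?q\<bar>) \<le> sqrt (variance (jump_prob l))"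
    if "l = k \<or> l = - k" for l
    using expectation_abs_dev_le_sqrt_variance[OF integrable_jump_prob integrable_jump_prob_square, of l]
      that prob_jump_event_uminus[of k]
    by (auto simp: expectation_jump_prob)
  have "?q * (\<Sum>j\<in>J. \<bar>prob (level_set (j + k)) - prob (level_set j)\<bar>)
      \<le> (\<Sum>j\<in>J. (\<integral>x. indicator (level_set (j + k)) x * \<bar>jump_prob (- k) x - ?q\<bar> \<partial>M)
          + (\<integral>x. indicator (level_set j) x * \<bar>jump_prob k x - ?q\<bar> \<partial>M))"
    unfolding sum_distrib_left by (intro sum_mono prob_jump_event_mult_abs_diff_le)
  also have "\<dots> = (\<Sum>j\<in>(\<lambda>j. j + k) ` J. \<integral>x. indicator (level_set j) x * \<bar>jump_prob (- k) x - ?q\<bar> \<partial>M)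
      + (\<Sum>j\<in>J. \<integral>x. indicator (level_set j) x * \<bar>jump_prob k x - ?q\<bar> \<partial>M)"
    by (simp add: sum.distrib sum.reindex)
  also have "\<dots> \<le> sqrt (variance (jump_prob (- k))) + sqrt (variance (jump_prob k))"
    using fibres dev \<open>finite J\<close> by (intro add_mono order.trans[OF fibres]) auto
  finally show ?thesis
    using assms(2) by (simp add: field_simps)
qed

lemma prob_space_law: "prob_space law"
  unfolding law_def by (rule prob_space_distr) measurable

lemma measure_law_singleton: "measure law {j} = prob (level_set j)"
  unfolding law_def level_set_def by (subst measure_distr) (auto simp: vimage_def Int_def conj_commute)

lemma D_nm_law_le:
  assumes "m > 0" and "prob (jump_event (int m)) > 0"
  shows "(\<lambda>k. \<bar>fdiff 2 (Fbar m (cdf_int law)) k\<bar>) summable_on UNIV"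
    and "D_nm 1 m law \<le> (sqrt (variance (jump_prob (int m))) + sqrt (variance (jump_prob (- int m))))
                          / prob (jump_event (int m))"
proof -
  let ?B = "(sqrt (variance (jump_prob (int m))) + sqrt (variance (jump_prob (- int m))))
              / prob (jump_event (int m))"
  define h where "h = (\<lambda>k. \<bar>fdiff 2 (Fbar m (cdf_int law)) k\<bar>)"
  have "finite_measure law" "sets law = UNIV"
    using prob_space_law by (auto simp: prob_space_def law_def)
  then have "fdiff 2 (Fbar m (cdf_int law)) k = (prob (level_set (k + 2)) - prob (level_set (k + 2 - int m))) / real m" for k
    using fdiff2_Fbar_cdf_int[OF _ _ \<open>m > 0\<close>, of law k] \<open>m > 0\<close>
    by (simp add: measure_law_singleton field_simps)
  then have h_eq: "h k = \<bar>prob (level_set (k + 2 - int m + int m)) - prob (level_set (k + 2 - int m))\<bar> / real m" for k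
    by (simp add: h_def)
  have "sum h K \<le> ?B / real m" if "finite K" for K
  proof -
    have "sum h K = (\<Sum>j\<in>(\<lambda>k. k + 2 - int m) ` K. \<bar>prob (level_set (j + int m)) - prob (level_set j)\<bar>) / real m"
      unfolding h_eq by (simp add: sum_divide_distrib sum.reindex inj_on_def)
    also have "\<dots> \<le> ?B / real m"
      using that assms by (intro divide_right_mono sum_abs_prob_level_set_diff_le) auto
    finally show ?thesis .
  qed
  moreover have "0 \<le> h k" for k
    by (simp add: h_def)
  ultimately have "h summable_on UNIV" "infsum h UNIV \<le> ?B / real m"
    using nonneg_finite_sums_le_summable_on by blast+
  then show "(\<lambda>k. \<bar>fdiff 2 (Fbar m (cdf_int law)) k\<bar>) summable_on UNIV"
    by (simp add: h_def)
  have "D_nm 1 m law = real m * infsum h UNIV"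
    by (simp add: D_nm_def norm1_def h_def numeral_2_eq_2)
  also have "\<dots> \<le> real m * (?B / real m)"
    using \<open>infsum h UNIV \<le> ?B / real m\<close> by (rule mult_left_mono) simp
  finally show "D_nm 1 m law \<le> ?B"
    using \<open>m > 0\<close> by simp
qed

end

theorem theorem3:
  fixes M :: "'a measure" and N :: "'b measure"
    and X X' :: "'a \<Rightarrow> 'b" and W :: "'b \<Rightarrow> int" and m :: nat
  assumes "prob_space M"
    and X_meas: "X \<in> measurable M N" and X'_meas: "X' \<in> measurable M N"
    and W_meas: "W \<in> measurable N (count_space UNIV)"
    and exch: "distr M (N \<Otimes>\<^sub>M N) (\<lambda>\<omega>. (X \<omega>, X' \<omega>))
             = distr M (N \<Otimes>\<^sub>M N) (\<lambda>\<omega>. (X' \<omega>, X \<omega>))"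
    and m_pos: "m > 0"
    and q_pos: "measure M {\<omega>\<in>space M. W (X' \<omega>) = W (X \<omega>) + int m} > 0"
  shows "(let QmX = real_cond_exp M (vimage_algebra (space M) X N)
                  (indicator {\<omega>\<in>space M. W (X' \<omega>) = W (X \<omega>) + int m});
              QnmX = real_cond_exp M (vimage_algebra (space M) X N)
                  (indicator {\<omega>\<in>space M. W (X' \<omega>) = W (X \<omega>) - int m});
              qm = measure M {\<omega>\<in>space M. W (X' \<omega>) = W (X \<omega>) + int m};
              L = distr M (count_space UNIV) (\<lambda>\<omega>. W (X \<omega>))
          in (\<lambda>k. \<bar>fdiff 2 (Fbar m (cdf_int L)) k\<bar>) summable_on UNIV
             \<and> D_nm 1 m L
               \<le> (sqrt (prob_space.variance M QmX) + sqrt (prob_space.variance M QnmX)) / qm)"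
proof -
  interpret exchangeable_pair M N X X' W
    using assms(1) X_meas X'_meas W_meas exch
    by (intro exchangeable_pair.intro exchangeable_pair_axioms.intro)
  show ?thesis
    using D_nm_law_le[OF m_pos] q_pos
    unfolding Let_def jump_prob_def law_def jump_event_def by simp
qed

end
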